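(* If $\nu>-1$, then the function $x\mapsto -\mathcal{J}_\nu'(x)$ is strictly log-concave on $(0,j_{\nu+1,1})$.
   Context: For $\nu>-1$ define $\mathcal{J}_\nu:\mathbb{R}\to(-\infty,1]$ by $\mathcal{J}_\nu(x)=\sum_{n\ge0}\frac{(-1/4)^n}{(\nu+1)_n\, n!}x^{2n}$, equivalently $\mathcal{J}_\nu(x)=2^\nu\Gamma(\nu+1)x^{-\nu}J_\nu(x)$ for $x>0$, where $J_\nu$ is the Bessel function of the first kind and $(a)_n$ is the Pochhammer symbol. $j_{\mu,1}$ denotes the first positive zero of $J_\mu$. Note that $-\mathcal{J}_\nu'(x)>0$ on $(0,j_{\nu+1,1})$. *)

theory Defs
  imports "HOL-Analysis.Analysis"
begin

definition calJ :: "real \<Rightarrow> real \<Rightarrow> real" where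
  "calJ nu x = (\<Sum>n. (-1/4)^n / (pochhammer (nu + 1) n * fact n) * x^(2*n))"

text \<open>Bessel function of the first kind (for x > 0).\<close>
definition BesselJ :: "real \<Rightarrow> real \<Rightarrow> real" where
  "BesselJ mu x = (\<Sum>n. (-1)^n / (fact n * Gamma (real n + mu + 1)) * (x/2) powr (2 * real n + mu))"

definition first_zero :: "real \<Rightarrow> real" where
  "first_zero mu = Inf {x. 0 < x \<and> BesselJ mu x = 0}"

definition strictly_concave_on :: "real set \<Rightarrow> (real \<Rightarrow> real) \<Rightarrow> bool" where
  "strictly_concave_on S f \<longleftrightarrow> convex S \<and>
     (\<forall>x\<in>S. \<forall>y\<in>S. x \<noteq> y \<longrightarrow> (\<forall>u. 0 < u \<and> u < 1 \<longrightarrow>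
        f (u * x + (1 - u) * y) > u * f x + (1 - u) * f y))"

definition strictly_log_concave_on :: "real set \<Rightarrow> (real \<Rightarrow> real) \<Rightarrow> bool" where
  "strictly_log_concave_on S f \<longleftrightarrow> (\<forall>x\<in>S. f x > 0) \<and> strictly_concave_on S (\<lambda>x. ln (f x))"

end

theory Submission
  imports Defs
begin

text \<open>
  Put mu = nu + 1. Termwise differentiation gives -calJ nu' x = x calJ mu x / (2 mu), so the
  logarithm of this function has derivative 1/x - r x / (2 (mu + 1)) with
  r x = x calJ (mu + 1) x / calJ mu x, and it suffices that r increases below the first zero.
  There calJ mu > 0, as calJ mu is BesselJ mu up to a positive factor and calJ mu 0 = 1.
  The contiguous relation turns the derivative of calJ (mu + 1) into
  x calJ (mu + 1)' = 2 (mu + 1) (calJ mu - calJ (mu + 1)). An equation x f' = a (g - f) with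
  a > 0 means (x powr a * f)' = a x powr (a - 1) * g, so f inherits positivity from g. This
  gives calJ (mu + 1) > 0, and, applied to the numerator N of r' = N / (calJ mu)^2, which
  satisfies x N' = (2 mu + 1) (calJ mu * calJ (mu + 1) - N), it gives N > 0.
\<close>

definition calJ_coeff :: "real \<Rightarrow> nat \<Rightarrow> real" where
  "calJ_coeff nu n = (-1/4)^n / (pochhammer (nu + 1) n * fact n)"

definition calJ_powser :: "real \<Rightarrow> real \<Rightarrow> real" where
  "calJ_powser nu y = (\<Sum>n. calJ_coeff nu n * y^n)"

lemma calJ_eq_powser: "calJ nu x = calJ_powser nu (x^2)"
  unfolding calJ_def calJ_powser_def calJ_coeff_def by (simp add: power_mult)

lemma calJ_coeff_Suc:
  assumes "nu > -1"
  shows "calJ_coeff nu (Suc n) = calJ_coeff nu n * (-1/4) / ((nu + 1 + n) * (real n + 1))"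
  using pochhammer_pos[of "nu + 1" n] assms
  by (simp add: calJ_coeff_def pochhammer_rec' field_simps)

lemma summable_calJ_powser:
  assumes "nu > -1"
  shows "summable (\<lambda>n. calJ_coeff nu n * y^n)"
proof (rule summable_ratio_test[where c="1/2" and N="nat \<lceil>\<bar>y\<bar>\<rceil>"])
  fix n assume "n \<ge> nat \<lceil>\<bar>y\<bar>\<rceil>"
  define q where "q = (nu + 1 + n) * (real n + 1)"
  have "q \<ge> nu + 1 + n" "nu + 1 + n > 0"
    using assms by (simp_all add: q_def mult_le_cancel_left1)
  moreover have "\<bar>y\<bar> \<le> real n" using \<open>n \<ge> nat \<lceil>\<bar>y\<bar>\<rceil>\<close> by linarith
  ultimately have q: "q > 0" "\<bar>y\<bar> / (4 * q) \<le> 1/2"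
    using assms by (simp_all add: field_simps)
  have "norm (calJ_coeff nu (Suc n) * y ^ Suc n)
      = \<bar>y\<bar> / (4 * q) * norm (calJ_coeff nu n * y^n)"
    using q by (simp add: calJ_coeff_Suc[OF assms] q_def[symmetric] abs_mult)
  also have "\<dots> \<le> 1/2 * norm (calJ_coeff nu n * y^n)"
    using q by (intro mult_right_mono) simp_all
  finally show "norm (calJ_coeff nu (Suc n) * y ^ Suc n) \<le> 1/2 * norm (calJ_coeff nu n * y^n)" .
qed simp

lemma Suc_mult_calJ_coeff_Suc:
  assumes "nu > -1"
  shows "4 * (nu + 1) * (real (Suc n) * calJ_coeff nu (Suc n)) = - calJ_coeff (nu + 1) n"
proof -
  define a where "a = nu + 1"
  have "pochhammer (a + 1) n > 0" "a > 0"
    using assms by (simp_all add: a_def pochhammer_pos)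
  then show ?thesis
    unfolding calJ_coeff_def pochhammer_rec fact_Suc a_def[symmetric]
    by (simp add: field_simps del: of_nat_Suc)
qed

lemma diffs_calJ_coeff:
  assumes "nu > -1"
  shows "diffs (calJ_coeff nu) n = -(1 / (4 * (nu + 1))) * calJ_coeff (nu + 1) n"
  using Suc_mult_calJ_coeff_Suc[OF assms, of n] assms
  by (simp add: diffs_def field_simps del: of_nat_Suc)

lemma calJ_coeff_param_succ:
  assumes "nu > -1"
  shows "(nu + 1 + n) * calJ_coeff (nu + 1) n = (nu + 1) * calJ_coeff nu n"
proof -
  have pos: "pochhammer (nu + 1) n > 0" "nu + 1 > 0" "nu + 1 + n > 0"
    using assms by (simp_all add: pochhammer_pos)
  have "(nu + 1) * pochhammer (nu + 1 + 1) n = (nu + 1 + n) * pochhammer (nu + 1) n"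
    by (metis pochhammer_rec pochhammer_rec')
  then have e: "pochhammer (nu + 1 + 1) n = (nu + 1 + n) * (pochhammer (nu + 1) n / (nu + 1))"
    using pos by (simp add: field_simps)
  show ?thesis
    unfolding calJ_coeff_def e using pos by simp
qed

lemma calJ_coeff_contiguous:
  assumes "nu > -1"
  shows "4 * (nu + 1) * (nu + 2) * (calJ_coeff nu (Suc n) - calJ_coeff (nu + 1) (Suc n))
    = - calJ_coeff (nu + 2) n"
proof -
  have "4 * (nu + 1) * (nu + 2) * (calJ_coeff nu (Suc n) - calJ_coeff (nu + 1) (Suc n))
      = 4 * (nu + 2) * ((nu + 1) * (calJ_coeff nu (Suc n) - calJ_coeff (nu + 1) (Suc n)))"
    by (simp only: mult_ac)
  also have "(nu + 1) * (calJ_coeff nu (Suc n) - calJ_coeff (nu + 1) (Suc n))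
      = real (Suc n) * calJ_coeff (nu + 1) (Suc n)"
    using calJ_coeff_param_succ[OF assms, of "Suc n"] by (simp add: algebra_simps)
  also have "4 * (nu + 2) * (real (Suc n) * calJ_coeff (nu + 1) (Suc n)) = - calJ_coeff (nu + 2) n"
    using Suc_mult_calJ_coeff_Suc[of "nu + 1" n] assms by (simp add: add.assoc del: of_nat_Suc)
  finally show ?thesis .
qed

lemma calJ_powser_has_real_derivative:
  assumes "nu > -1"
  shows "(calJ_powser nu has_real_derivative -(1 / (4 * (nu + 1))) * calJ_powser (nu + 1) y) (at y)"
proof -
  have "(calJ_powser nu has_real_derivative (\<Sum>n. diffs (calJ_coeff nu) n * y^n)) (at y)"
    unfolding calJ_powser_def
    by (rule termdiffs_strong_converges_everywhere) (rule summable_calJ_powser[OF assms])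
  also have "(\<Sum>n. diffs (calJ_coeff nu) n * y^n)
      = (\<Sum>n. -(1 / (4 * (nu + 1))) * (calJ_coeff (nu + 1) n * y^n))"
    by (simp add: diffs_calJ_coeff[OF assms] mult.assoc)
  also have "\<dots> = -(1 / (4 * (nu + 1))) * calJ_powser (nu + 1) y"
    unfolding calJ_powser_def using assms by (intro suminf_mult summable_calJ_powser) simp
  finally show ?thesis .
qed

lemma calJ_powser_contiguous:
  assumes "nu > -1"
  shows "4 * (nu + 1) * (nu + 2) * (calJ_powser nu y - calJ_powser (nu + 1) y)
    = - y * calJ_powser (nu + 2) y"
proof -
  define d where
    "d n = 4 * (nu + 1) * (nu + 2) * (calJ_coeff nu n - calJ_coeff (nu + 1) n) * y^n" for n
  have "d sums (4 * (nu + 1) * (nu + 2) * (calJ_powser nu y - calJ_powser (nu + 1) y))"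
    unfolding d_def calJ_powser_def left_diff_distrib right_diff_distrib mult.assoc
    using assms by (intro sums_diff sums_mult summable_sums summable_calJ_powser) auto
  moreover have "(\<lambda>n. d (Suc n)) = (\<lambda>n. - y * (calJ_coeff (nu + 2) n * y^n))"
    unfolding d_def calJ_coeff_contiguous[OF assms] by (simp add: fun_eq_iff)
  moreover have "d 0 = 0"
    by (simp add: d_def calJ_coeff_def)
  moreover have "(\<lambda>n. - y * (calJ_coeff (nu + 2) n * y^n)) sums (- y * calJ_powser (nu + 2) y)"
    unfolding calJ_powser_def using assms by (intro sums_mult summable_sums summable_calJ_powser) auto
  ultimately show ?thesis
    using sums_Suc_iff[of d] sums_unique2 by fastforce
qed

lemma calJ_has_real_derivative:
  assumes "nu > -1"
  shows "(calJ nu has_real_derivative -x / (2 * (nu + 1)) * calJ (nu + 1) x) (at x within S)"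
proof -
  have "((\<lambda>x. calJ_powser nu (x^2)) has_real_derivative
      -(1 / (4 * (nu + 1))) * calJ_powser (nu + 1) (x^2) * (2 * x)) (at x)"
    by (rule DERIV_chain2[OF calJ_powser_has_real_derivative[OF assms]])
      (auto intro!: derivative_eq_intros)
  moreover have "-(1 / (4 * (nu + 1))) * calJ_powser (nu + 1) (x^2) * (2 * x)
      = -x / (2 * (nu + 1)) * calJ (nu + 1) x"
    using assms by (simp add: calJ_eq_powser field_simps)
  ultimately show ?thesis
    by (auto intro: has_field_derivative_at_within simp: calJ_eq_powser[abs_def])
qed

lemma continuous_on_calJ: "nu > -1 \<Longrightarrow> continuous_on S (calJ nu)"
  using calJ_has_real_derivative by (meson DERIV_continuous continuous_at_imp_continuous_on)

lemma calJ_0 [simp]: "calJ nu 0 = 1"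
  unfolding calJ_eq_powser calJ_powser_def using powser_zero[of "calJ_coeff nu"]
  by (simp add: calJ_coeff_def)

lemma calJ_contiguous:
  assumes "nu > -1"
  shows "4 * (nu + 1) * (nu + 2) * (calJ nu x - calJ (nu + 1) x) = - (x^2) * calJ (nu + 2) x"
  unfolding calJ_eq_powser by (rule calJ_powser_contiguous[OF assms])

lemma calJ_succ_has_real_derivative:
  assumes "nu > -1" "x \<noteq> 0"
  shows "(calJ (nu + 1) has_real_derivative
    2 * (nu + 1) / x * (calJ nu x - calJ (nu + 1) x)) (at x within S)"
proof -
  \<comment> \<open>fresh a, b keep field_simps from distributing nu + 1 and nu + 2\<close>
  have rescale: "2 * a / x * d = -x / (2 * b) * j"
    if "4 * a * b * d = - (x^2) * j" "a > 0" "b > 0" for a b d j :: real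
    using that assms(2) by (simp add: field_simps power2_eq_square)
  from rescale[OF calJ_contiguous[OF assms(1)]]
  have "2 * (nu + 1) / x * (calJ nu x - calJ (nu + 1) x) = -x / (2 * (nu + 2)) * calJ (nu + 2) x"
    using assms(1) by simp
  then show ?thesis
    using calJ_has_real_derivative[of "nu + 1" x S] assms(1) by (simp add: add.assoc)
qed

lemma BesselJ_eq_calJ:
  assumes "nu > -1" "x > 0"
  shows "BesselJ nu x = (x/2) powr nu / Gamma (nu + 1) * calJ nu x"
proof -
  have rearrange: "a / (f * (p * g)) * (b * X) = X / g * (c / (p * f) * d)"
    if "a * b = c * d" "f > 0" "p > 0" "g > 0" for a b c d f p g X :: real
    using that by (simp add: field_simps)
  have series_term: "(-1)^n / (fact n * Gamma (real n + nu + 1)) * (x/2) powr (2 * real n + nu)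
      = (x/2) powr nu / Gamma (nu + 1) * (calJ_coeff nu n * (x^2)^n)" for n
  proof -
    have "nu + 1 \<notin> \<int>\<^sub>\<le>\<^sub>0" "Gamma (nu + 1) > 0"
      using assms(1) by (auto dest: nonpos_Ints_nonpos)
    then have Gamma: "Gamma (real n + nu + 1) = pochhammer (nu + 1) n * Gamma (nu + 1)"
      using pochhammer_Gamma[of "nu + 1" n] by (simp add: add_ac)
    have powr: "(x/2) powr (2 * real n + nu) = (x/2)^(2*n) * (x/2) powr nu"
      using assms(2) by (simp add: powr_add powr_realpow[symmetric])
    have "(-1)^n * (x/2)^(2*n) = ((-1) * (x/2)^2)^n"
      by (simp only: power_mult power_mult_distrib)
    also have "(-1) * (x/2)^2 = (-1/4) * x^2"
      by (simp add: power2_eq_square)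
    finally have "(-1)^n * (x/2)^(2*n) = (-1/4)^n * (x^2)^n"
      by (simp only: power_mult_distrib)
    then show ?thesis
      unfolding Gamma powr calJ_coeff_def
      by (rule rearrange) (use assms(1) \<open>Gamma (nu + 1) > 0\<close> in \<open>simp_all add: pochhammer_pos\<close>)
  qed
  show ?thesis
    unfolding BesselJ_def calJ_eq_powser calJ_powser_def series_term
    using summable_calJ_powser[OF assms(1)] by (rule suminf_mult)
qed

lemma concave_combination_gt_if_deriv_decreasing:
  fixes f f' :: "real \<Rightarrow> real"
  assumes "x < y" "0 < u" "u < 1"
    and deriv: "\<And>t. x \<le> t \<Longrightarrow> t \<le> y \<Longrightarrow> (f has_real_derivative f' t) (at t)"
    and decreasing: "\<And>s t. x \<le> s \<Longrightarrow> s < t \<Longrightarrow> t \<le> y \<Longrightarrow> f' t < f' s"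
  shows "f (u * x + (1 - u) * y) > u * f x + (1 - u) * f y"
proof -
  define z where "z = u * x + (1 - u) * y"
  have zx: "z - x = (1 - u) * (y - x)" and yz: "y - z = u * (y - x)"
    by (simp_all add: z_def algebra_simps)
  have "x < z" "z < y"
    using zx yz assms(1-3) by (smt (verit) mult_pos_pos)+
  obtain s where s: "x < s" "s < z" "f z - f x = (z - x) * f' s"
    using MVT2[OF \<open>x < z\<close>, of f f'] deriv \<open>z < y\<close> by force
  obtain t where t: "z < t" "t < y" "f y - f z = (y - z) * f' t"
    using MVT2[OF \<open>z < y\<close>, of f f'] deriv \<open>x < z\<close> by force
  have "u * (f z - f x) - (1 - u) * (f y - f z) = u * (1 - u) * (y - x) * (f' s - f' t)"
    unfolding s(3) t(3) zx yz by (simp add: algebra_simps)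
  moreover have "u * (1 - u) * (y - x) * (f' s - f' t) > 0"
    using assms(1-3) decreasing[of s t] s t by simp
  ultimately show ?thesis
    unfolding z_def[symmetric] by (simp add: algebra_simps)
qed

lemma strictly_concave_on_Ioo_if_deriv_decreasing:
  fixes f f' :: "real \<Rightarrow> real"
  assumes deriv: "\<And>t. a < t \<Longrightarrow> t < b \<Longrightarrow> (f has_real_derivative f' t) (at t)"
    and decreasing: "\<And>s t. a < s \<Longrightarrow> s < t \<Longrightarrow> t < b \<Longrightarrow> f' t < f' s"
  shows "strictly_concave_on {a<..<b} f"
  unfolding strictly_concave_on_def
proof (intro conjI ballI impI allI)
  fix x y u :: real
  assume "x \<in> {a<..<b}" "y \<in> {a<..<b}" "x \<noteq> y" "0 < u \<and> u < 1"
  then consider "x < y" | "y < x" "0 < 1 - u" "1 - u < 1"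
    by linarith
  then show "f (u * x + (1 - u) * y) > u * f x + (1 - u) * f y"
  proof cases
    case 1
    show ?thesis
      by (rule concave_combination_gt_if_deriv_decreasing[OF 1, of u f f'])
        (use \<open>x \<in> _\<close> \<open>y \<in> _\<close> \<open>0 < u \<and> u < 1\<close> deriv decreasing in auto)
  next
    case 2
    have "f ((1 - u) * y + (1 - (1 - u)) * x) > (1 - u) * f y + (1 - (1 - u)) * f x"
      by (rule concave_combination_gt_if_deriv_decreasing[OF 2, of f f'])
        (use \<open>x \<in> _\<close> \<open>y \<in> _\<close> deriv decreasing in auto)
    then show ?thesis
      by (simp add: algebra_simps)
  qed
qed simp

lemma pos_if_deriv_eq_relaxation:
  fixes f g :: "real \<Rightarrow> real"
  assumes "a > 0" "x > 0" "continuous_on {0..x} f"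
    and deriv: "\<And>t. 0 < t \<Longrightarrow> t < x \<Longrightarrow> (f has_real_derivative a / t * (g t - f t)) (at t)"
    and pos: "\<And>t. 0 < t \<Longrightarrow> t < x \<Longrightarrow> g t > 0"
  shows "f x > 0"
proof -
  have powr_deriv: "((\<lambda>t. t powr a * f t) has_real_derivative a * t powr (a - 1) * g t) (at t)"
    if "0 < t" "t < x" for t
  proof (rule DERIV_cong)
    show "((\<lambda>t. t powr a * f t) has_real_derivative
        t powr a * (a / t * (g t - f t)) + a * t powr (a - 1) * f t) (at t)"
      using that by (intro DERIV_mult' has_real_derivative_powr deriv)
    show "t powr a * (a / t * (g t - f t)) + a * t powr (a - 1) * f t = a * t powr (a - 1) * g t"
      using that by (simp add: powr_diff field_simps)
  qed
  have "continuous_on {0..x} (\<lambda>t. t powr a * f t)"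
    using assms(1,3) by (intro continuous_on_mult continuous_on_powr') (auto intro: continuous_intros)
  then have "0 powr a * f 0 < x powr a * f x"
  proof (rule DERIV_pos_imp_increasing_open[OF \<open>x > 0\<close>, rotated])
    show "\<exists>y. ((\<lambda>t. t powr a * f t) has_real_derivative y) (at t) \<and> y > 0" if "0 < t" "t < x" for t
      using powr_deriv[OF that] pos[OF that] \<open>a > 0\<close> \<open>0 < t\<close> by auto
  qed
  then show ?thesis
    using \<open>x > 0\<close> by (simp add: zero_less_mult_iff)
qed

lemma calJ_pos_below_first_zero:
  assumes "nu > -1" "0 < x" "x < first_zero nu"
  shows "calJ nu x > 0"
proof (rule ccontr)
  assume "\<not> calJ nu x > 0"
  then obtain z where z: "0 \<le> z" "z \<le> x" "calJ nu z = 0"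
    using IVT2'[of "calJ nu" x 0 0] continuous_on_calJ[OF assms(1)] assms(2) by force
  then have "z > 0"
    by (cases "z = 0") auto
  then have "z \<in> {x. 0 < x \<and> BesselJ nu x = 0}"
    using BesselJ_eq_calJ[OF assms(1)] z by simp
  then have "first_zero nu \<le> z"
    unfolding first_zero_def by (rule cInf_lower) (rule bdd_belowI[of _ 0], auto)
  then show False
    using z assms(3) by simp
qed

lemma calJ_succ_pos_below_first_zero:
  assumes "nu > -1" "0 < x" "x < first_zero nu"
  shows "calJ (nu + 1) x > 0"
proof (rule pos_if_deriv_eq_relaxation[where f = "calJ (nu + 1)" and g = "calJ nu" and a = "2 * (nu + 1)"])
  show "(calJ (nu + 1) has_real_derivative 2 * (nu + 1) / t * (calJ nu t - calJ (nu + 1) t)) (at t)"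
    if "0 < t" "t < x" for t
    using calJ_succ_has_real_derivative assms(1) that(1) by simp
  show "calJ nu t > 0" if "0 < t" "t < x" for t
    using calJ_pos_below_first_zero[of nu t] that assms by simp
qed (use assms continuous_on_calJ in auto)

definition calJ_ratio_numer :: "real \<Rightarrow> real \<Rightarrow> real" where
  "calJ_ratio_numer nu x = 2 * (nu + 1) * calJ nu x ^ 2 - (2 * nu + 1) * calJ nu x * calJ (nu + 1) x
     + x^2 * calJ (nu + 1) x ^ 2 / (2 * (nu + 1))"

lemma calJ_ratio_has_real_derivative:
  assumes "nu > -1" "x \<noteq> 0" "calJ nu x \<noteq> 0"
  shows "((\<lambda>t. t * calJ (nu + 1) t / calJ nu t) has_real_derivative
    calJ_ratio_numer nu x / calJ nu x ^ 2) (at x)"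
proof (rule DERIV_cong)
  define a where "a = 2 * (nu + 1)"
  have "a > 0" "2 * nu + 1 = a - 1" using assms(1) by (simp_all add: a_def)
  show "((\<lambda>t. t * calJ (nu + 1) t / calJ nu t) has_real_derivative
      ((x * (a / x * (calJ nu x - calJ (nu + 1) x)) + 1 * calJ (nu + 1) x) * calJ nu x
        - x * calJ (nu + 1) x * (-x / a * calJ (nu + 1) x)) / (calJ nu x * calJ nu x)) (at x)"
    unfolding a_def using assms
    by (intro DERIV_divide DERIV_mult' DERIV_ident calJ_has_real_derivative
        calJ_succ_has_real_derivative) simp_all
  show "((x * (a / x * (calJ nu x - calJ (nu + 1) x)) + 1 * calJ (nu + 1) x) * calJ nu x
        - x * calJ (nu + 1) x * (-x / a * calJ (nu + 1) x)) / (calJ nu x * calJ nu x)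
      = calJ_ratio_numer nu x / calJ nu x ^ 2"
    unfolding calJ_ratio_numer_def a_def[symmetric] \<open>2 * nu + 1 = a - 1\<close>
    using \<open>a > 0\<close> assms(2,3) by (simp add: field_simps power2_eq_square)
qed

lemma calJ_ratio_numer_has_real_derivative:
  assumes "nu > -1" "x \<noteq> 0"
  shows "(calJ_ratio_numer nu has_real_derivative
    (2 * nu + 1) / x * (calJ nu x * calJ (nu + 1) x - calJ_ratio_numer nu x)) (at x)"
proof -
  define a where "a = 2 * (nu + 1)"
  define J0 where "J0 = calJ nu"
  define J1 where "J1 = calJ (nu + 1)"
  have "a > 0" "2 * nu + 1 = a - 1" using assms(1) by (simp_all add: a_def)
  have d0: "(J0 has_real_derivative -x / a * J1 x) (at x within S)" for S
    unfolding a_def J0_def J1_def using assms(1) by (rule calJ_has_real_derivative)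
  have d1: "(J1 has_real_derivative a / x * (J0 x - J1 x)) (at x within S)" for S
    unfolding a_def J0_def J1_def using assms by (rule calJ_succ_has_real_derivative)
  show ?thesis
    unfolding calJ_ratio_numer_def[abs_def] a_def[symmetric] \<open>2 * nu + 1 = a - 1\<close>
      J0_def[symmetric] J1_def[symmetric]
    using \<open>a > 0\<close> assms(2)
    by (auto intro!: derivative_eq_intros d0 d1 simp: field_simps power2_eq_square)
qed

lemma calJ_ratio_numer_pos_below_first_zero:
  assumes "nu > -1/2" "0 < x" "x < first_zero nu"
  shows "calJ_ratio_numer nu x > 0"
proof (rule pos_if_deriv_eq_relaxation[where f = "calJ_ratio_numer nu"
    and g = "\<lambda>t. calJ nu t * calJ (nu + 1) t" and a = "2 * nu + 1"])
  show "(calJ_ratio_numer nu has_real_derivative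
      (2 * nu + 1) / t * (calJ nu t * calJ (nu + 1) t - calJ_ratio_numer nu t)) (at t)"
    if "0 < t" "t < x" for t
    using calJ_ratio_numer_has_real_derivative[of nu t] assms(1) that(1) by simp
  show "calJ nu t * calJ (nu + 1) t > 0" if "0 < t" "t < x" for t
    using calJ_pos_below_first_zero[of nu t] calJ_succ_pos_below_first_zero[of nu t] that assms
    by simp
  show "continuous_on {0..x} (calJ_ratio_numer nu)"
    unfolding calJ_ratio_numer_def[abs_def] using assms(1)
    by (intro continuous_intros continuous_on_calJ) auto
qed (use assms in auto)

lemma calJ_ratio_strict_mono:
  assumes "nu > -1/2" "0 < s" "s < t" "t < first_zero nu"
  shows "s * calJ (nu + 1) s / calJ nu s < t * calJ (nu + 1) t / calJ nu t"
proof (rule DERIV_pos_imp_increasing[OF \<open>s < t\<close>])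
  fix x assume "s \<le> x" "x \<le> t"
  then have "0 < x" "x < first_zero nu" using assms by auto
  then have "calJ nu x > 0" "calJ_ratio_numer nu x > 0"
    using assms(1) calJ_pos_below_first_zero calJ_ratio_numer_pos_below_first_zero by simp_all
  then show "\<exists>y. ((\<lambda>t. t * calJ (nu + 1) t / calJ nu t) has_real_derivative y) (at x) \<and> y > 0"
    using calJ_ratio_has_real_derivative[of nu x] assms(1) \<open>0 < x\<close> by force
qed

lemma strictly_log_concave_on_mult_calJ:
  assumes "mu > -1/2" "k > 0"
  shows "strictly_log_concave_on {0<..<first_zero mu} (\<lambda>x. k * x * calJ mu x)"
proof -
  define c where "c = 2 * (mu + 1)"
  define J0 where "J0 = calJ mu"
  define J1 where "J1 = calJ (mu + 1)"
  have "c > 0" using assms(1) by (simp add: c_def)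
  have pos: "J0 x > 0" if "x \<in> {0<..<first_zero mu}" for x
    using calJ_pos_below_first_zero[of mu x] assms(1) that by (simp add: J0_def)
  have "strictly_concave_on {0<..<first_zero mu} (\<lambda>x. ln (k * x * J0 x))"
  proof (rule strictly_concave_on_Ioo_if_deriv_decreasing)
    fix t assume t: "0 < t" "t < first_zero mu"
    have "(J0 has_real_derivative -t / c * J1 t) (at t)"
      unfolding J0_def J1_def c_def using assms(1) by (intro calJ_has_real_derivative) simp
    then show "((\<lambda>x. ln (k * x * J0 x)) has_real_derivative 1 / t - t * J1 t / J0 t / c) (at t)"
      using t pos[of t] assms(2) \<open>c > 0\<close> by (auto intro!: derivative_eq_intros simp: field_simps)
  next
    fix s t assume "0 < s" "s < t" "t < first_zero mu"
    then have "1 / t < 1 / s" "s * J1 s / J0 s < t * J1 t / J0 t"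
      using calJ_ratio_strict_mono[of mu s t] assms(1) by (simp_all add: J0_def J1_def frac_less2)
    with \<open>c > 0\<close> show "1 / t - t * J1 t / J0 t / c < 1 / s - s * J1 s / J0 s / c"
      by (smt (verit) divide_strict_right_mono)
  qed
  then show ?thesis
    unfolding strictly_log_concave_on_def using pos assms(2) by (simp add: J0_def)
qed

theorem theorem2:
  fixes nu :: real
  assumes "nu > -1"
  shows "strictly_log_concave_on {0<..<first_zero (nu + 1)} (\<lambda>x. - deriv (calJ nu) x)"
proof -
  have "(\<lambda>x. - deriv (calJ nu) x) = (\<lambda>x. 1 / (2 * (nu + 1)) * x * calJ (nu + 1) x)"
    using DERIV_imp_deriv[OF calJ_has_real_derivative[OF assms]] by (simp add: fun_eq_iff)
  moreover have "strictly_log_concave_on {0<..<first_zero (nu + 1)}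
      (\<lambda>x. 1 / (2 * (nu + 1)) * x * calJ (nu + 1) x)"
    using assms by (intro strictly_log_concave_on_mult_calJ) simp_all
  ultimately show ?thesis
    by simp
qed

end
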